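(* There exist two populations $P$ and $P'$ with the same users, intervals, speech points, disutilities $b_i$ and initial adopters $\mathcal S_0$, differing only in personalization parameters with $\lambda_i>\lambda_i'$ for all $i\in[n]$ (where $\lambda_i$ belongs to $P$ and $\lambda_i'$ to $P'$), such that $$s(P,I^* )>s(P',I^{*\prime}),$$ where $I^*$ and $I^{*\prime}$ are moderation windows maximizing $s(P,\cdot)$ and $s(P',\cdot)$ respectively. Moreover, for every $b>0$ and $\lambda\in(0,1]$ such a pair can be constructed with $b_1=\dots=b_n=b$, $\lambda_1=\dots=\lambda_n=\lambda$, and $\lambda_1'=\dots=\lambda_n'=\lambda'$ for some appropriately chosen $\lambda'$.
   Context: A population consists of users $1,\dots,n$ and a set $\mathcal S_0$ of initial adopters; user $i$ has a closed interval $[l_i,r_i]$, speech point $p_i\in[l_i,r_i]$, disutility $b_i\ge0$ and personalization parameter $\lambda_i\in[0,1]$. For $\mathcal S\subseteq[n]$, user $i$'s utility is $u_i(\mathcal S)=\sum_{j\in\mathcal S\setminus\{i\}}\big(\mathbf 1[p_j\in[l_i,r_i]]-\lambda_ib_i\mathbf 1[p_j\notin[l_i,r_i]]\big)$. A moderation window is a closed interval $I$; users with $p_i\notin I$ are banned and never on the platform. The platform starts with the non-banned initial adopters; a starvation-free switching order $\sigma:\mathbb Z_{>0}\to[n]$ lists each user infinitely often, and at time $t$ the non-banned user $\sigma(t)$ is on the platform after step $t$ iff $u_{\sigma(t)}(\mathcal W)\ge0$ where $\mathcal W$ is the current set of users on the platform; others are unchanged. With $\mathcal W(P,I,\sigma,t)$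 the set after step $t$, $s(P,I)=\min_\sigma\liminf_{t\to\infty}|\mathcal W(P,I,\sigma,t)|$ over starvation-free $\sigma$. *)

theory Defs
  imports Main "HOL-Library.Extended_Nat" "HOL-Library.Liminf_Limsup"
begin

text \<open>Users are indexed 0, ..., n-1 (the paper's users 1..n).\<close>

record pop =
  nusers :: nat
  lo :: "nat \<Rightarrow> real"
  hi :: "nat \<Rightarrow> real"
  pt :: "nat \<Rightarrow> real"
  dis :: "nat \<Rightarrow> real"
  lam :: "nat \<Rightarrow> real"
  init :: "nat set"

definition valid_pop :: "pop \<Rightarrow> bool" where
  "valid_pop P \<longleftrightarrow> nusers P \<ge> 1 \<and> init P \<subseteq> {..<nusers P} \<and>
     (\<forall>i<nusers P. lo P i \<le> pt P i \<and> pt P i \<le> hi P i \<and> dis P i \<ge> 0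
        \<and> 0 \<le> lam P i \<and> lam P i \<le> 1)"

definition util :: "pop \<Rightarrow> nat \<Rightarrow> nat set \<Rightarrow> real" where
  "util P i S = (\<Sum>j\<in>S - {i}. (if pt P j \<in> {lo P i..hi P i} then 1 else 0)
                   - lam P i * dis P i * (if pt P j \<notin> {lo P i..hi P i} then 1 else 0))"

definition windows :: "(real \<times> real) set" where
  "windows = {(a, c). a \<le> c}"

definition win :: "real \<times> real \<Rightarrow> real set" where
  "win I = {fst I..snd I}"

text \<open>Dynamics: state after step t; step t (t \<ge> 1) is performed by user sigma t.\<close>
fun dyn :: "pop \<Rightarrow> real \<times> real \<Rightarrow> (nat \<Rightarrow> nat) \<Rightarrow> nat \<Rightarrow> nat set" where
  "dyn P I \<sigma> 0 = {i \<in> init P. pt P i \<in> win I}"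
| "dyn P I \<sigma> (Suc t) =
     (let i = \<sigma> (Suc t); W = dyn P I \<sigma> t in
      if pt P i \<notin> win I then W
      else if util P i W \<ge> 0 then insert i W else W - {i})"

definition starvation_free :: "pop \<Rightarrow> (nat \<Rightarrow> nat) \<Rightarrow> bool" where
  "starvation_free P \<sigma> \<longleftrightarrow> (\<forall>t>0. \<sigma> t < nusers P) \<and>
     (\<forall>i<nusers P. infinite {t. t > 0 \<and> \<sigma> t = i})"

definition sval :: "pop \<Rightarrow> real \<times> real \<Rightarrow> enat" where
  "sval P I = Inf {Liminf sequentially (\<lambda>t. enat (card (dyn P I \<sigma> t))) | \<sigma>.
                   starvation_free P \<sigma>}"

definition optimal_window :: "pop \<Rightarrow> real \<times> real \<Rightarrow> bool" where
  "optimal_window P I \<longleftrightarrow> I \<in> windows \<and> (\<forall>J\<in>windows. sval P J \<le> sval P I)"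

definition prop6_pair :: "pop \<Rightarrow> pop \<Rightarrow> bool" where
  "prop6_pair P P' \<longleftrightarrow> valid_pop P \<and> valid_pop P' \<and> P' = P\<lparr>lam := lam P'\<rparr> \<and>
     (\<forall>i<nusers P. lam P i > lam P' i) \<and>
     (\<exists>I. optimal_window P I) \<and> (\<exists>I'. optimal_window P' I') \<and>
     (\<forall>I I'. optimal_window P I \<longrightarrow> optimal_window P' I' \<longrightarrow> sval P I > sval P' I')"

end

theory Submission
  imports Defs
begin

text \<open>
  Fix \<open>d\<close> and split the users into an upper group of \<open>d\<^sup>2\<close> users at point 2
  with interval \<open>[2,3]\<close>, a pivot at point 3, \<open>d\<close> seeds at point 1, and a lower
  group of \<open>d\<^sup>2 + 1\<close> users at point 0 with interval \<open>[0,1]\<close>; the pivot and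
  the seeds are the initial adopters and tolerate all of \<open>[0,3]\<close>. Write
  \<open>r = \<lambda>b\<close>, take \<open>d \<ge> r\<close> with \<open>r d > 1\<close>, and put
  \<open>\<lambda>' = 1/(b d) < \<lambda>\<close>, so that \<open>r' d = 1\<close>.

  Under \<open>\<lambda>\<close> an upper user always faces the \<open>d\<close> seeds as strangers and at most
  the pivot as a friend, so it never joins; a lower user then sees only the pivot as a
  stranger, joins as soon as it moves and stays. Under the window \<open>[0,3]\<close> every
  order thus ends with at least \<open>d\<^sup>2 + d + 2\<close> users.

  Under \<open>\<lambda>'\<close> an upper user facing the pivot and the seeds is exactly indifferent,
  so with the window \<open>[0,3]\<close> a round-robin order lets the whole upper group join
  first; afterwards a lower user sees \<open>d\<^sup>2 + 1\<close> strangers against \<open>d\<close> friends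
  and never joins. Every other window bans the lower group, or bans the pivot so that the
  upper group again stays away. Hence \<open>s(P',I) \<le> d\<^sup>2 + d + 1\<close> for every window.
\<close>

section \<open>Dynamics of a population\<close>

definition switch :: "pop \<Rightarrow> real \<times> real \<Rightarrow> nat \<Rightarrow> nat set \<Rightarrow> nat set" where
  "switch P I i W = (if pt P i \<notin> win I then W
      else if util P i W \<ge> 0 then insert i W else W - {i})"

lemma dyn_Suc_switch: "dyn P I \<sigma> (Suc t) = switch P I (\<sigma> (Suc t)) (dyn P I \<sigma> t)"
  by (simp add: switch_def Let_def)

lemma mem_switch_other: "j \<noteq> i \<Longrightarrow> i \<in> switch P I j W \<longleftrightarrow> i \<in> W"
  by (auto simp: switch_def)

lemma dyn_invariant:
  assumes "Inv (dyn P I \<sigma> 0)" "\<And>W i. Inv W \<Longrightarrow> i < nusers P \<Longrightarrow> Inv (switch P I i W)"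
    and "\<forall>t>0. \<sigma> t < nusers P"
  shows "Inv (dyn P I \<sigma> t)"
proof (induction t)
  case 0
  show ?case using assms(1) .
next
  case (Suc t)
  then show ?case
    using assms(2,3) unfolding dyn_Suc_switch by simp
qed

lemma dyn_subset_allowed:
  assumes "init P \<subseteq> {..<nusers P}" "\<forall>t>0. \<sigma> t < nusers P"
  shows "dyn P I \<sigma> t \<subseteq> {i. i < nusers P \<and> pt P i \<in> win I}"
  by (rule dyn_invariant[where Inv = "\<lambda>W. W \<subseteq> {i. i < nusers P \<and> pt P i \<in> win I}"])
     (use assms in \<open>auto simp: switch_def\<close>)

lemma finite_dyn:
  assumes "init P \<subseteq> {..<nusers P}" "\<forall>t>0. \<sigma> t < nusers P"
  shows "finite (dyn P I \<sigma> t)"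
  using dyn_subset_allowed[OF assms] by (rule finite_subset) auto

lemma eventually_mem_dyn:
  assumes "starvation_free P \<sigma>" "i < nusers P"
    and accepted: "\<And>t. \<sigma> (Suc t) = i \<Longrightarrow> i \<in> dyn P I \<sigma> (Suc t)"
  shows "\<forall>\<^sub>F t in sequentially. i \<in> dyn P I \<sigma> t"
proof -
  have "infinite {t. t > 0 \<and> \<sigma> t = i}"
    using assms(1,2) unfolding starvation_free_def by blast
  then obtain t0 where "t0 > 0" "\<sigma> t0 = i"
    using not_finite_existsD by blast
  then obtain t1 where t1: "\<sigma> (Suc t1) = i"
    using gr0_implies_Suc by blast
  have "i \<in> dyn P I \<sigma> t" if "Suc t1 \<le> t" for t
    using that
  proof (induction t rule: dec_induct)
    case base
    show ?case using accepted[OF t1] .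
  next
    case (step t)
    then show ?case
      using accepted[of t] unfolding dyn_Suc_switch
      by (cases "\<sigma> (Suc t) = i") (auto simp: mem_switch_other)
  qed
  then show ?thesis
    unfolding eventually_sequentially by blast
qed

definition friends :: "pop \<Rightarrow> nat \<Rightarrow> nat set \<Rightarrow> nat set" where
  "friends P i S = {j \<in> S - {i}. pt P j \<in> {lo P i..hi P i}}"

definition strangers :: "pop \<Rightarrow> nat \<Rightarrow> nat set \<Rightarrow> nat set" where
  "strangers P i S = {j \<in> S - {i}. pt P j \<notin> {lo P i..hi P i}}"

lemma util_eq_card:
  assumes "finite S"
  shows "util P i S =
    real (card (friends P i S)) - lam P i * dis P i * real (card (strangers P i S))"
proof -
  have "util P i S = (\<Sum>j\<in>S-{i}. (if pt P j \<in> {lo P i..hi P i} then 1 else 0))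
     - lam P i * dis P i * (\<Sum>j\<in>S-{i}. (if pt P j \<notin> {lo P i..hi P i} then 1 else 0))"
    unfolding util_def by (simp add: sum_subtractf sum_distrib_left)
  then show ?thesis
    using assms by (simp add: sum.If_cases Int_def friends_def strangers_def)
qed

lemma util_nonneg:
  assumes "\<And>j. j \<in> S - {i} \<Longrightarrow> pt P j \<in> {lo P i..hi P i}"
  shows "0 \<le> util P i S"
  unfolding util_def using assms by (intro sum_nonneg) auto

lemma util_ge_card:
  assumes "finite S" "A \<subseteq> friends P i S" "strangers P i S \<subseteq> B" "finite B"
    and "0 \<le> lam P i * dis P i"
  shows "real (card A) - lam P i * dis P i * real (card B) \<le> util P i S"
proof -
  have "card A \<le> card (friends P i S)"
    using assms(1,2) by (intro card_mono) (auto simp: friends_def)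
  moreover have "card (strangers P i S) \<le> card B"
    using assms(3,4) by (intro card_mono)
  ultimately show ?thesis
    using assms(5) util_eq_card[OF assms(1), of P i]
    by (smt (verit) mult_left_mono of_nat_le_iff)
qed

lemma util_le_card:
  assumes "finite S" "friends P i S \<subseteq> B" "A \<subseteq> strangers P i S" "finite B"
    and "0 \<le> lam P i * dis P i"
  shows "util P i S \<le> real (card B) - lam P i * dis P i * real (card A)"
proof -
  have "card A \<le> card (strangers P i S)"
    using assms(1,3) by (intro card_mono) (auto simp: strangers_def)
  moreover have "card (friends P i S) \<le> card B"
    using assms(2,4) by (intro card_mono)
  ultimately show ?thesis
    using assms(5) util_eq_card[OF assms(1), of P i]
    by (smt (verit) mult_left_mono of_nat_le_iff)
qed

definition round_robin :: "nat \<Rightarrow> nat \<Rightarrow> nat" where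
  "round_robin n t = (t - 1) mod n"

lemma starvation_free_round_robin:
  assumes "nusers P \<ge> 1"
  shows "starvation_free P (round_robin (nusers P))"
  unfolding starvation_free_def
proof (intro conjI allI impI)
  fix t :: nat
  show "round_robin (nusers P) t < nusers P"
    using assms by (simp add: round_robin_def)
next
  fix i assume i: "i < nusers P"
  have "range (\<lambda>k. Suc (i + k * nusers P)) \<subseteq> {t. t > 0 \<and> round_robin (nusers P) t = i}"
    using i by (auto simp: round_robin_def)
  moreover have "inj (\<lambda>k. Suc (i + k * nusers P))"
    using assms by (auto simp: inj_def)
  ultimately show "infinite {t. t > 0 \<and> round_robin (nusers P) t = i}"
    using infinite_super range_inj_infinite by blast
qed

lemma sval_le_enat:
  assumes "starvation_free P \<sigma>" "\<And>t. card (dyn P I \<sigma> t) \<le> m"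
  shows "sval P I \<le> enat m"
proof -
  have "sval P I \<le> Liminf sequentially (\<lambda>t. enat (card (dyn P I \<sigma> t)))"
    unfolding sval_def using assms(1) by (blast intro: Inf_lower)
  also have "\<dots> \<le> Liminf sequentially (\<lambda>_. enat m)"
    using assms(2) by (intro Liminf_mono) simp
  finally show ?thesis
    by (simp add: Liminf_const)
qed

lemma enat_le_sval:
  assumes "\<And>\<sigma>. starvation_free P \<sigma> \<Longrightarrow>
    \<forall>\<^sub>F t in sequentially. m \<le> card (dyn P I \<sigma> t)"
  shows "enat m \<le> sval P I"
  unfolding sval_def
proof (rule Inf_greatest, clarify)
  fix \<sigma> assume "starvation_free P \<sigma>"
  then show "enat m \<le> Liminf sequentially (\<lambda>t. enat (card (dyn P I \<sigma> t)))"
    using assms by (intro Liminf_bounded) (auto elim: eventually_mono)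
qed

lemma optimal_window_exists:
  assumes "nusers P \<ge> 1" "init P \<subseteq> {..<nusers P}"
  shows "\<exists>I. optimal_window P I"
proof -
  let ?\<sigma> = "round_robin (nusers P)"
  have sf: "starvation_free P ?\<sigma>"
    using assms(1) by (rule starvation_free_round_robin)
  have "sval P J \<le> enat (nusers P)" for J
  proof (rule sval_le_enat[OF sf])
    fix t
    have "dyn P J ?\<sigma> t \<subseteq> {..<nusers P}"
      using dyn_subset_allowed[OF assms(2)] sf unfolding starvation_free_def by blast
    then show "card (dyn P J ?\<sigma> t) \<le> nusers P"
      by (metis card_lessThan card_mono finite_lessThan)
  qed
  then have "finite (sval P ` windows)"
    by (intro finite_enat_bounded) blast
  moreover have "sval P ` windows \<noteq> {}"
    unfolding windows_def by auto
  ultimately have "Max (sval P ` windows) \<in> sval P ` windows"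
    by (rule Max_in)
  then obtain I where "I \<in> windows" "sval P I = Max (sval P ` windows)"
    by (metis imageE)
  then have "optimal_window P I"
    unfolding optimal_window_def using \<open>finite (sval P ` windows)\<close> by auto
  then show ?thesis ..
qed

section \<open>A population that prefers stronger personalization\<close>

abbreviation upper_group :: "nat \<Rightarrow> nat set" where
  "upper_group d \<equiv> {..<d*d}"

abbreviation pivot :: "nat \<Rightarrow> nat" where
  "pivot d \<equiv> d*d"

abbreviation seeds :: "nat \<Rightarrow> nat set" where
  "seeds d \<equiv> {d*d+1..<d*d+1+d}"

abbreviation lower_group :: "nat \<Rightarrow> nat set" where
  "lower_group d \<equiv> {d*d+1+d..<2*(d*d)+d+2}"

lemma example_user_cases:
  assumes "i < 2*(d*d)+d+2"
  obtains "i \<in> upper_group d" | "i = pivot d" | "i \<in> seeds d" | "i \<in> lower_group d"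
  using assms by (metis atLeastLessThan_iff lessThan_iff Suc_eq_plus1 less_Suc_eq not_less)

definition example_pop :: "nat \<Rightarrow> real \<Rightarrow> real \<Rightarrow> pop" where
  "example_pop d b l = \<lparr>nusers = 2*(d*d)+d+2,
     lo = \<lambda>i. if i \<in> upper_group d then 2 else 0,
     hi = \<lambda>i. if i \<in> lower_group d then 1 else 3,
     pt = \<lambda>i. if i \<in> upper_group d then 2 else if i = pivot d then 3
               else if i \<in> seeds d then 1 else 0,
     dis = \<lambda>_. b, lam = \<lambda>_. l, init = insert (pivot d) (seeds d)\<rparr>"

lemma example_pop_simps [simp]:
  "nusers (example_pop d b l) = 2*(d*d)+d+2"
  "lo (example_pop d b l) i = (if i \<in> upper_group d then 2 else 0)"
  "hi (example_pop d b l) i = (if i \<in> lower_group d then 1 else 3)"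
  "pt (example_pop d b l) i = (if i \<in> upper_group d then 2 else if i = pivot d then 3
     else if i \<in> seeds d then 1 else 0)"
  "dis (example_pop d b l) i = b"
  "lam (example_pop d b l) i = l"
  "init (example_pop d b l) = insert (pivot d) (seeds d)"
  by (simp_all add: example_pop_def)

lemma valid_example_pop:
  "0 \<le> b \<Longrightarrow> 0 \<le> l \<Longrightarrow> l \<le> 1 \<Longrightarrow> valid_pop (example_pop d b l)"
  by (auto simp: valid_pop_def)

lemma pos_of_mult_of_nat_pos: "0 < x * real n \<Longrightarrow> 0 < (x :: real)"
  by (smt (verit) mult_nonpos_nonneg of_nat_0_le_iff)

lemma util_example_tolerant:
  "i \<in> insert (pivot d) (seeds d) \<Longrightarrow> 0 \<le> util (example_pop d b l) i W"
  by (rule util_nonneg) auto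

lemma util_example_upper_le:
  assumes "i \<in> upper_group d" "finite W" "seeds d \<subseteq> W" "W \<inter> upper_group d = {}" "0 \<le> l*b"
  shows "util (example_pop d b l) i W \<le> real (card (W \<inter> {pivot d})) - l*b * real d"
proof -
  let ?P = "example_pop d b l"
  have "util ?P i W \<le> real (card (W \<inter> {pivot d})) - lam ?P i * dis ?P i * real (card (seeds d))"
    by (rule util_le_card) (use assms in \<open>auto simp: friends_def strangers_def\<close>)
  then show ?thesis
    by simp
qed

lemma util_example_upper_ge:
  assumes "i \<in> upper_group d" "W \<subseteq> {..<d*d+1+d}" "insert (pivot d) (seeds d) \<subseteq> W"
    and "0 \<le> l*b"
  shows "1 - l*b * real d \<le> util (example_pop d b l) i W"
proof -
  let ?P = "example_pop d b l"
  have "real (card {pivot d}) - lam ?P i * dis ?P i * real (card (seeds d)) \<le> util ?P i W"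
    by (rule util_ge_card)
       (use assms in \<open>auto simp: friends_def strangers_def intro: finite_subset\<close>)
  then show ?thesis
    by simp
qed

lemma util_example_lower_ge:
  assumes "i \<in> lower_group d" "finite W" "seeds d \<subseteq> W" "W \<inter> upper_group d = {}" "0 \<le> l*b"
  shows "real d - l*b \<le> util (example_pop d b l) i W"
proof -
  let ?P = "example_pop d b l"
  have "real (card (seeds d)) - lam ?P i * dis ?P i * real (card {pivot d}) \<le> util ?P i W"
    by (rule util_ge_card) (use assms in \<open>auto simp: friends_def strangers_def\<close>)
  then show ?thesis
    by simp
qed

lemma util_example_lower_le:
  assumes "i \<in> lower_group d" "W \<subseteq> {..<d*d+1+d}" "upper_group d \<subseteq> W" "pivot d \<in> W"
    and "0 \<le> l*b"
  shows "util (example_pop d b l) i W \<le> real d - l*b * (real d * real d + 1)"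
proof -
  let ?P = "example_pop d b l"
  have "util ?P i W \<le> real (card (seeds d))
      - lam ?P i * dis ?P i * real (card (insert (pivot d) (upper_group d)))"
    by (rule util_le_card)
       (use assms in \<open>auto simp: friends_def strangers_def intro: finite_subset\<close>)
  then show ?thesis
    by (simp add: add.commute)
qed

lemma switch_example_upper_rejected:
  assumes "i \<in> upper_group d" "finite W" "seeds d \<subseteq> W" "W \<inter> upper_group d = {}"
    and "real (card (W \<inter> {pivot d})) < l*b*real d"
  shows "switch (example_pop d b l) I i W \<subseteq> W"
proof -
  have "0 < l*b"
    by (rule pos_of_mult_of_nat_pos[of _ d]) (use assms(5) in linarith)
  then have "util (example_pop d b l) i W \<le> real (card (W \<inter> {pivot d})) - l*b * real d"
    using assms(1-4) by (intro util_example_upper_le) auto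
  then have "util (example_pop d b l) i W < 0"
    using assms(5) by linarith
  then show ?thesis
    by (auto simp: switch_def)
qed

text \<open>
  While the upper group is out, the pivot is the only possible friend of an upper user,
  and it counts only when it is allowed; hence the two alternative hypotheses on
  \<open>r d\<close>.
\<close>

lemma dyn_example_upper_group_excluded:
  fixes d :: nat and b l :: real
  defines "P \<equiv> example_pop d b l"
  assumes "0 < l*b*real d" "1 \<in> win I" "3 \<in> win I \<Longrightarrow> 1 < l*b*real d"
    and "\<forall>t>0. \<sigma> t < nusers P"
  shows "dyn P I \<sigma> 0 \<subseteq> dyn P I \<sigma> t \<and> dyn P I \<sigma> t \<inter> upper_group d = {}"
proof -
  let ?W0 = "dyn P I \<sigma> 0"
  define Inv where "Inv W \<longleftrightarrow>
    ?W0 \<subseteq> W \<and> W \<inter> upper_group d = {} \<and> W \<subseteq> {i. i < nusers P \<and> pt P i \<in> win I}" for W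
  have "Inv (dyn P I \<sigma> t)"
  proof (rule dyn_invariant)
    show "Inv ?W0"
      by (auto simp: Inv_def P_def)
  next
    fix W i
    assume "Inv W" and i: "i < nusers P"
    then have W0: "?W0 \<subseteq> W" and upper_out: "W \<inter> upper_group d = {}"
      and allowed: "W \<subseteq> {i. i < nusers P \<and> pt P i \<in> win I}"
      by (auto simp: Inv_def)
    show "Inv (switch P I i W)"
    proof (cases "i \<in> upper_group d")
      case True
      have "real (card (W \<inter> {pivot d})) < l*b*real d"
      proof (cases "3 \<in> win I")
        case True
        have "card (W \<inter> {pivot d}) \<le> 1"
          using card_mono[of "{pivot d}" "W \<inter> {pivot d}"] by simp
        then show ?thesis
          using assms(4)[OF True] by linarith
      next
        case False
        moreover have "pt P (pivot d) = 3"
          by (simp add: P_def)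
        ultimately have "W \<inter> {pivot d} = {}"
          using allowed by fastforce
        then show ?thesis
          using assms(2) by simp
      qed
      moreover have "finite W"
        using allowed by (auto intro: finite_subset[of W "{..<nusers P}"])
      moreover have "seeds d \<subseteq> W"
        using W0 assms(3) by (auto simp: P_def)
      ultimately have "switch P I i W \<subseteq> W"
        using True upper_out unfolding P_def by (intro switch_example_upper_rejected)
      moreover have "i \<notin> ?W0"
        using True by (auto simp: P_def)
      then have "?W0 \<subseteq> switch P I i W"
        using W0 by (auto simp: switch_def)
      ultimately show ?thesis
        using upper_out allowed unfolding Inv_def by blast
    next
      case False
      have "0 \<le> util P i W" if "i \<in> ?W0"
        using that unfolding P_def by (intro util_example_tolerant) simp
      then show ?thesis
        using W0 upper_out allowed False i unfolding Inv_def by (auto simp: switch_def)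
    qed
  qed (use assms(5) in auto)
  then show ?thesis
    by (simp add: Inv_def)
qed

lemma example_full_window_sval_ge:
  fixes d :: nat and b l :: real
  defines "P \<equiv> example_pop d b l"
  assumes "1 < l*b*real d" "l*b \<le> real d"
  shows "enat (d*d+d+2) \<le> sval P (0, 3)"
proof (rule enat_le_sval)
  fix \<sigma> assume sf: "starvation_free P \<sigma>"
  let ?W = "dyn P (0, 3) \<sigma>"
  have \<sigma>: "\<forall>t>0. \<sigma> t < nusers P"
    using sf unfolding starvation_free_def by blast
  have lb: "0 < l*b"
    by (rule pos_of_mult_of_nat_pos[of _ d]) (use assms(2) in linarith)
  have inv: "insert (pivot d) (seeds d) \<subseteq> ?W t \<and> ?W t \<inter> upper_group d = {}" for t
    using dyn_example_upper_group_excluded[of l b d "(0, 3)" \<sigma> t] assms(2) \<sigma>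
    by (auto simp: P_def win_def)
  have fin: "finite (?W t)" for t
    using \<sigma> by (intro finite_dyn) (auto simp: P_def)
  have lower: "\<forall>\<^sub>F t in sequentially. i \<in> ?W t" if i: "i \<in> lower_group d" for i
  proof (rule eventually_mem_dyn[OF sf])
    show "i < nusers P"
      using i by (simp add: P_def)
  next
    fix t assume t: "\<sigma> (Suc t) = i"
    have "real d - l*b \<le> util P i (?W t)"
      using i fin inv lb unfolding P_def by (intro util_example_lower_ge) auto
    then have "0 \<le> util P i (?W t)"
      using assms(3) by linarith
    then show "i \<in> ?W (Suc t)"
      unfolding dyn_Suc_switch t by (simp add: switch_def P_def win_def)
  qed
  have "\<forall>\<^sub>F t in sequentially. \<forall>i\<in>lower_group d. i \<in> ?W t"
    using lower by (intro eventually_ball_finite) auto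
  then show "\<forall>\<^sub>F t in sequentially. d*d+d+2 \<le> card (?W t)"
  proof (rule eventually_mono)
    fix t assume lower_in: "\<forall>i\<in>lower_group d. i \<in> ?W t"
    have "{d*d..<2*(d*d)+d+2} \<subseteq> ?W t"
    proof
      fix i assume i: "i \<in> {d*d..<2*(d*d)+d+2}"
      then have "i < 2*(d*d)+d+2"
        by simp
      then show "i \<in> ?W t"
        by (cases rule: example_user_cases) (use i inv[of t] lower_in in auto)
    qed
    then have "card {d*d..<2*(d*d)+d+2} \<le> card (?W t)"
      using fin by (rule card_mono[rotated])
    then show "d*d+d+2 \<le> card (?W t)"
      by simp
  qed
qed

lemma switch_example_full_window:
  fixes d :: nat and b l :: real
  defines "P \<equiv> example_pop d b l"
  assumes "l*b*real d = 1" "\<And>j. pt P j \<in> win I" "i < nusers P"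
    and "W \<subseteq> {..<d*d+1+d}" "insert (pivot d) (seeds d) \<subseteq> W"
    and "i \<in> lower_group d \<Longrightarrow> upper_group d \<subseteq> W"
  shows "switch P I i W = (if i \<in> lower_group d then W else insert i W)"
proof -
  have lb: "0 < l*b"
    by (rule pos_of_mult_of_nat_pos[of _ d]) (use assms(2) in simp)
  have "i < 2*(d*d)+d+2"
    using assms(4) by (simp add: P_def)
  then show ?thesis
  proof (cases rule: example_user_cases)
    case 1
    have "1 - l*b * real d \<le> util P i W"
      using 1 assms(5,6) lb unfolding P_def by (intro util_example_upper_ge) auto
    then show ?thesis
      using 1 assms(2,3) by (simp add: switch_def)
  next
    case 4
    have "util P i W \<le> real d - l*b * (real d * real d + 1)"
      using 4 assms(5,6,7) lb unfolding P_def by (intro util_example_lower_le) auto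
    also have "\<dots> = - (l*b)"
      using assms(2) by (simp add: algebra_simps)
    finally have "util P i W < 0"
      using lb by linarith
    moreover have "i \<notin> W"
      using 4 assms(5) by auto
    ultimately show ?thesis
      using 4 by (auto simp: switch_def)
  qed (use assms(3)[of i] in \<open>auto simp: switch_def P_def intro: util_example_tolerant\<close>)
qed

lemma dyn_example_round_robin:
  fixes d :: nat and b l :: real
  defines "P \<equiv> example_pop d b l"
  assumes "l*b*real d = 1" "\<And>j. pt P j \<in> win I"
  shows "dyn P I (round_robin (nusers P)) t \<subseteq> {..<d*d+1+d}"
proof -
  let ?W = "dyn P I (round_robin (nusers P))"
  have "insert (pivot d) (seeds d) \<subseteq> ?W t \<and> ?W t \<subseteq> {..<d*d+1+d}
    \<and> {..<min t (d*d)} \<subseteq> ?W t"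
  proof (induction t)
    case 0
    show ?case
      using assms(3) by (auto simp: P_def)
  next
    case (Suc t)
    let ?i = "t mod nusers P"
    have i: "?i < nusers P"
      by (simp add: P_def)
    have early: "?i = t" if "t < d*d"
      using that by (simp add: P_def)
    have upper_in: "upper_group d \<subseteq> ?W t" if "?i \<in> lower_group d"
      using Suc.IH early that by (cases "t < d*d") auto
    have "round_robin (nusers P) (Suc t) = ?i"
      by (simp add: round_robin_def)
    then have "?W (Suc t) = switch P I ?i (?W t)"
      by (simp only: dyn_Suc_switch)
    also have "\<dots> = (if ?i \<in> lower_group d then ?W t else insert ?i (?W t))"
      using Suc.IH i assms(2,3) upper_in
      unfolding P_def by (intro switch_example_full_window) auto
    finally show ?case
      using Suc.IH i early by (cases "t < d*d") (auto simp: P_def less_Suc_eq min_def)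
  qed
  then show ?thesis
    by blast
qed

lemma card_dyn_example_round_robin_le:
  fixes d :: nat and b l :: real
  defines "P \<equiv> example_pop d b l"
  assumes "l*b*real d = 1"
  shows "card (dyn P I (round_robin (nusers P)) t) \<le> d*d+d+1"
proof -
  let ?\<sigma> = "round_robin (nusers P)"
  let ?W = "dyn P I ?\<sigma> t"
  have \<sigma>: "\<forall>t>0. ?\<sigma> t < nusers P"
    by (simp add: round_robin_def P_def)
  have "?W \<subseteq> {i. i < nusers P \<and> pt P i \<in> win I}"
    using \<sigma> by (intro dyn_subset_allowed) (auto simp: P_def)
  then have allowed: "i < 2*(d*d)+d+2" "pt P i \<in> win I" if "i \<in> ?W" for i
    using that by (auto simp: P_def)
  have "?W \<subseteq> {..<d*d+1+d} \<or> ?W \<subseteq> {d*d+1..<2*(d*d)+d+2}"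
  proof (cases "0 \<in> win I")
    case False
    have "?W \<subseteq> {..<d*d+1+d}"
    proof
      fix i assume "i \<in> ?W"
      with allowed[of i] False show "i \<in> {..<d*d+1+d}"
        by (cases rule: example_user_cases[of i d]) (auto simp: P_def)
    qed
    then show ?thesis ..
  next
    case True
    consider "2 \<notin> win I" | "2 \<in> win I" "3 \<notin> win I" | "3 \<in> win I"
      by blast
    then show ?thesis
    proof cases
      case 1
      with True have "3 \<notin> win I"
        by (auto simp: win_def)
      have "?W \<subseteq> {d*d+1..<2*(d*d)+d+2}"
      proof
        fix i assume "i \<in> ?W"
        with allowed[of i] 1 \<open>3 \<notin> win I\<close> show "i \<in> {d*d+1..<2*(d*d)+d+2}"
          by (cases rule: example_user_cases[of i d]) (auto simp: P_def)
      qed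
      then show ?thesis ..
    next
      case 2
      with True have "1 \<in> win I"
        by (auto simp: win_def)
      then have upper_out: "?W \<inter> upper_group d = {}"
        using dyn_example_upper_group_excluded[of l b d I ?\<sigma> t] assms(2) 2 \<sigma>
        by (simp add: P_def)
      have "?W \<subseteq> {d*d+1..<2*(d*d)+d+2}"
      proof
        fix i assume "i \<in> ?W"
        with allowed[of i] 2 upper_out show "i \<in> {d*d+1..<2*(d*d)+d+2}"
          by (cases rule: example_user_cases[of i d]) (auto simp: P_def)
      qed
      then show ?thesis ..
    next
      case 3
      with True have all_allowed: "pt P j \<in> win I" for j
        by (auto simp: win_def P_def)
      have "?W \<subseteq> {..<d*d+1+d}"
        using assms(2) all_allowed unfolding P_def by (rule dyn_example_round_robin)
      then show ?thesis ..
    qed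
  qed
  then show ?thesis
    using card_mono[of "{..<d*d+1+d}" ?W] card_mono[of "{d*d+1..<2*(d*d)+d+2}" ?W] by auto
qed

lemma example_sval_le:
  assumes "l*b*real d = 1"
  shows "sval (example_pop d b l) I \<le> enat (d*d+d+1)"
proof (rule sval_le_enat)
  show "starvation_free (example_pop d b l) (round_robin (nusers (example_pop d b l)))"
    by (rule starvation_free_round_robin) simp
qed (rule card_dyn_example_round_robin_le[OF assms])

lemma prop6_pair_example:
  assumes "0 < b" "0 \<le> l'" "l' < l" "l \<le> 1"
    and "1 < l*b*real d" "l*b \<le> real d" "l'*b*real d = 1"
  shows "prop6_pair (example_pop d b l) (example_pop d b l')"
proof -
  have beats: "sval (example_pop d b l') I' < sval (example_pop d b l) I"
    if "optimal_window (example_pop d b l) I" for I I'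
  proof -
    have "sval (example_pop d b l') I' \<le> enat (d*d+d+1)"
      using assms(7) by (rule example_sval_le)
    also have "\<dots> < enat (d*d+d+2)"
      by simp
    also have "\<dots> \<le> sval (example_pop d b l) (0, 3)"
      using assms(5,6) by (rule example_full_window_sval_ge)
    also have "\<dots> \<le> sval (example_pop d b l) I"
      using that by (simp add: optimal_window_def windows_def)
    finally show ?thesis .
  qed
  have "\<exists>I. optimal_window (example_pop d b x) I" for x
    by (rule optimal_window_exists) auto
  moreover have "valid_pop (example_pop d b l)" "valid_pop (example_pop d b l')"
    using assms(1-4) by (simp_all add: valid_example_pop)
  moreover have "example_pop d b l' = (example_pop d b l)\<lparr>lam := lam (example_pop d b l')\<rparr>"
    by (simp add: example_pop_def)
  ultimately show ?thesis
    unfolding prop6_pair_def using assms(3) beats by simp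
qed

lemma prop6_pair_example_exists:
  fixes b l :: real
  assumes "0 < b" "0 < l" "l \<le> 1"
  shows "\<exists>P P' l'. prop6_pair P P' \<and> (\<forall>i<nusers P. dis P i = b \<and> lam P i = l \<and> lam P' i = l')"
proof -
  have lb: "0 < l*b"
    using assms(1,2) by simp
  obtain d :: nat where d: "1/(l*b) + l*b < real d"
    using reals_Archimedean2 by blast
  then have "1/(l*b) < real d" "l*b \<le> real d"
    using lb by (smt (verit) divide_pos_pos)+
  then have d_pos: "0 < real d" and large: "1 < l*b*real d"
    using lb by (auto simp: field_simps)
  define l' where "l' = 1/(b*real d)"
  have "l'*b*real d = 1" "0 \<le> l'" "l' < l"
    using assms(1) d_pos large by (auto simp: l'_def field_simps)
  then have "prop6_pair (example_pop d b l) (example_pop d b l')"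
    using assms(1,3) large \<open>l*b \<le> real d\<close> by (intro prop6_pair_example)
  then show ?thesis
    by force
qed

theorem proposition6:
  shows "(\<exists>P P'. prop6_pair P P') \<and>
    (\<forall>(b::real) (l::real). b > 0 \<longrightarrow> 0 < l \<longrightarrow> l \<le> 1 \<longrightarrow>
       (\<exists>P P' l'. prop6_pair P P' \<and>
          (\<forall>i<nusers P. dis P i = b \<and> lam P i = l \<and> lam P' i = l')))"
proof (intro conjI allI impI)
  show "\<exists>P P'. prop6_pair P P'"
    using prop6_pair_example_exists[of 1 1] by auto
next
  fix b l :: real
  assume "b > 0" "0 < l" "l \<le> 1"
  then show "\<exists>P P' l'. prop6_pair P P' \<and> (\<forall>i<nusers P. dis P i = b \<and> lam P i = l \<and> lam P' i = l')"
    by (rule prop6_pair_example_exists)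
qed

end
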